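(* Let $G$ be a finite simple graph with $n$ vertices whose degrees, listed in non-decreasing order, are $d_1 \le d_2 \le \dots \le d_n$. Let $\lambda \ge 0$ be the largest integer such that $$\sum_{i=1}^{\lambda} \left\lceil \frac{d_i}{2} + 1 \right\rceil \le \sum_{i=\lambda+1}^{n} \left\lfloor \frac{d_i}{2} \right\rfloor,$$ where an empty sum (e.g. $\sum_{i=1}^{0}$) equals $0$. Then $\gamma_s(G) \ge n - 2\lambda$.
   Context: For a vertex $v$ of $G$, $N[v]$ denotes the closed neighbourhood of $v$ (i.e. $v$ together with its neighbours). A signed domination function of $G$ is a function $f: V(G) \to \{-1, 1\}$ such that $\sum_{x \in N[v]} f(x) \ge 1$ for every vertex $v \in V(G)$. The weight of $f$ is $f(V(G)) = \sum_{v \in V(G)} f(v)$. The signed domination number $\gamma_s(G)$ is the minimum weight of a signed domination function of $G$. *)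

theory Defs
  imports Complex_Main "HOL-Library.Multiset"
begin

definition simple_graph :: "'a set \<Rightarrow> ('a \<Rightarrow> 'a \<Rightarrow> bool) \<Rightarrow> bool" where
  "simple_graph V E \<longleftrightarrow> finite V \<and> (\<forall>u v. E u v \<longrightarrow> u \<in> V \<and> v \<in> V)
     \<and> (\<forall>u v. E u v \<longrightarrow> E v u) \<and> (\<forall>v. \<not> E v v)"

definition degree :: "'a set \<Rightarrow> ('a \<Rightarrow> 'a \<Rightarrow> bool) \<Rightarrow> 'a \<Rightarrow> nat" where
  "degree V E v = card {u \<in> V. E v u}"

definition closed_nbhd :: "'a set \<Rightarrow> ('a \<Rightarrow> 'a \<Rightarrow> bool) \<Rightarrow> 'a \<Rightarrow> 'a set" where
  "closed_nbhd V E v = insert v {u \<in> V. E v u}"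

text \<open>Degree sequence in non-decreasing order; d_i is (degree_seq V E) ! (i - 1).\<close>
definition degree_seq :: "'a set \<Rightarrow> ('a \<Rightarrow> 'a \<Rightarrow> bool) \<Rightarrow> nat list" where
  "degree_seq V E = sorted_list_of_multiset (image_mset (degree V E) (mset_set V))"

definition signed_dom_fun :: "'a set \<Rightarrow> ('a \<Rightarrow> 'a \<Rightarrow> bool) \<Rightarrow> ('a \<Rightarrow> int) \<Rightarrow> bool" where
  "signed_dom_fun V E f \<longleftrightarrow> (\<forall>v\<in>V. f v \<in> {-1, 1})
     \<and> (\<forall>v\<in>V. (\<Sum>x\<in>closed_nbhd V E v. f x) \<ge> 1)"

definition signed_dom_number :: "'a set \<Rightarrow> ('a \<Rightarrow> 'a \<Rightarrow> bool) \<Rightarrow> int" where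
  "signed_dom_number V E = Min {(\<Sum>v\<in>V. f v) | f. signed_dom_fun V E f}"

definition lam_ok :: "nat list \<Rightarrow> nat \<Rightarrow> bool" where
  "lam_ok ds k \<longleftrightarrow>
     (\<Sum>i = 1..k. \<lceil>real (ds ! (i - 1)) / 2 + 1\<rceil>)
       \<le> (\<Sum>i = k + 1..length ds. \<lfloor>real (ds ! (i - 1)) / 2\<rfloor>)"

text \<open>lambda: the largest k (0 \<le> k \<le> n) satisfying the inequality (k = 0 always does).\<close>
definition lam :: "nat list \<Rightarrow> nat" where
  "lam ds = (GREATEST k. k \<le> length ds \<and> lam_ok ds k)"

end

theory Submission
  imports Defs
begin

text \<open>Let \<open>P\<close> and \<open>M\<close> be the vertices where a signed dominating function takes the value
  \<open>-1\<close> and \<open>1\<close>. The condition at a vertex of degree \<open>d\<close> in \<open>P\<close> forces at least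
  \<open>\<lceil>d/2 + 1\<rceil>\<close> neighbours in \<open>M\<close>, and at a vertex of \<open>M\<close> it allows at most \<open>\<lfloor>d/2\<rfloor>\<close>
  neighbours in \<open>P\<close>. Counting the edges between \<open>P\<close> and \<open>M\<close> from both sides gives
  \<open>\<Sum>\<^sub>P \<lceil>d/2 + 1\<rceil> \<le> \<Sum>\<^sub>M \<lfloor>d/2\<rfloor>\<close>, i.e. \<open>\<Sum>\<^sub>P (\<lceil>d/2 + 1\<rceil> + \<lfloor>d/2\<rfloor>) \<le> \<Sum>\<^sub>V \<lfloor>d/2\<rfloor>\<close>.
  The summand on the left is monotone in \<open>d\<close>, so the inequality persists when \<open>P\<close> is
  replaced by \<open>|P|\<close> vertices of smallest degree; hence \<open>|P| \<le> \<lambda>\<close>, and the weight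
  \<open>n - 2|P|\<close> is at least \<open>n - 2\<lambda>\<close>.\<close>

lemma sum_list_take_sorted_le_sum_mset:
  fixes \<phi> :: "'a::linorder \<Rightarrow> 'b::ordered_comm_monoid_add"
  assumes "mono \<phi>" "sorted xs" "A \<subseteq># mset xs"
  shows "sum_list (map \<phi> (take (size A) xs)) \<le> sum_mset (image_mset \<phi> A)"
  using assms(2,3)
proof (induction xs arbitrary: A)
  case (Cons x xs)
  show ?case
  proof (cases "A = {#}")
    case False
    obtain a where a: "a \<in># A" "A - {#a#} \<subseteq># mset xs" "x \<le> a"
    proof (cases "x \<in># A")
      case True
      moreover have "A - {#x#} \<subseteq># mset xs"
        using Cons.prems(2) by (metis add_mset_add_single mset.simps(2) subset_eq_diff_conv)
      ultimately show ?thesis using that by blast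
    next
      case False
      then have sub: "A \<subseteq># mset xs"
        using Cons.prems(2) by (metis Diff_eq_empty_iff_mset minus_add_mset_if_not_in_lhs mset.simps(2))
      obtain a where a: "a \<in># A" using \<open>A \<noteq> {#}\<close> by blast
      then have "a \<in> set xs" using mset_subset_eqD[OF sub] by simp
      with Cons.prems(1) have "x \<le> a" by simp
      moreover have "A - {#a#} \<subseteq># mset xs" using sub by (meson diff_subset_eq_self subset_mset.order_trans)
      ultimately show ?thesis using that a by blast
    qed
    have "sum_list (map \<phi> (take (size (A - {#a#})) xs)) \<le> sum_mset (image_mset \<phi> (A - {#a#}))"
      using Cons.IH Cons.prems(1) a(2) by simp
    moreover have "\<phi> x \<le> \<phi> a" using \<open>mono \<phi>\<close> a(3) by (rule monoD)
    moreover have "size A = Suc (size (A - {#a#}))" using a(1) by (metis insert_DiffM size_add_mset)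
    moreover have "sum_mset (image_mset \<phi> A) = \<phi> a + sum_mset (image_mset \<phi> (A - {#a#}))"
      using a(1) by (metis insert_DiffM sum_mset.insert)
    ultimately show ?thesis by (simp add: add_mono)
  qed simp
qed simp

lemma ceiling_half_plus_one: "\<lceil>real d / 2 + 1\<rceil> = int ((d + 1) div 2 + 1)"
proof (cases "even d")
  case False
  then obtain m where "d = 2 * m + 1" using oddE by blast
  then show ?thesis by (simp add: ceiling_eq_iff)
qed auto

lemma floor_half: "\<lfloor>real d / 2\<rfloor> = int (d div 2)"
  by (metis floor_divide_of_nat_eq of_nat_numeral)

lemma sum_Suc_nth_pred_eq_sum_list:
  assumes "b \<le> length xs"
  shows "(\<Sum>i = Suc a..b. f (xs ! (i - 1))) = sum_list (map f (take (b - a) (drop a xs)))"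
proof -
  have "(\<Sum>i = Suc a..b. f (xs ! (i - 1))) = (\<Sum>i = a..<b. f (xs ! i))"
  proof (cases b)
    case (Suc c)
    then show ?thesis using sum.atLeast_atMost_pred_shift[of "\<lambda>i. f (xs ! i)" a c]
      by (simp add: comp_def atLeastLessThanSuc_atLeastAtMost)
  qed simp
  also have "\<dots> = (\<Sum>i = 0..<b - a. f (xs ! (a + i)))"
    by (simp add: sum.atLeastLessThan_shift_0[of _ a b] comp_def)
  also have "\<dots> = sum_list (map f (take (b - a) (drop a xs)))"
    using assms by (auto simp: sum_list_sum_nth intro!: sum.cong)
  finally show ?thesis .
qed

lemma lam_ok_iff_take_drop:
  assumes "k \<le> length ds"
  shows "lam_ok ds k \<longleftrightarrow> (\<Sum>d\<leftarrow>take k ds. (d + 1) div 2 + 1) \<le> (\<Sum>d\<leftarrow>drop k ds. d div 2)"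
proof -
  have int_sum_list: "int (\<Sum>d\<leftarrow>xs. g d) = (\<Sum>d\<leftarrow>xs. int (g d))" for g and xs :: "nat list"
    by (induction xs) simp_all
  have "(\<Sum>i = 1..k. \<lceil>real (ds ! (i - 1)) / 2 + 1\<rceil>) = int (\<Sum>d\<leftarrow>take k ds. (d + 1) div 2 + 1)"
    using sum_Suc_nth_pred_eq_sum_list[of k ds "\<lambda>d. int ((d + 1) div 2 + 1)" 0] assms
    by (simp only: ceiling_half_plus_one int_sum_list One_nat_def) simp
  moreover have "(\<Sum>i = k + 1..length ds. \<lfloor>real (ds ! (i - 1)) / 2\<rfloor>) = int (\<Sum>d\<leftarrow>drop k ds. d div 2)"
    using sum_Suc_nth_pred_eq_sum_list[of "length ds" ds "\<lambda>d. int (d div 2)" k]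
    by (simp only: floor_half int_sum_list Suc_eq_plus1) simp
  ultimately show ?thesis unfolding lam_ok_def by simp
qed

lemma le_lam: "k \<le> length ds \<Longrightarrow> lam_ok ds k \<Longrightarrow> k \<le> lam ds"
  unfolding lam_def by (rule Greatest_le_nat[where b = "length ds"]) auto

lemma card_le_lam_sorted_weights:
  fixes w :: "'a \<Rightarrow> nat"
  assumes "finite V" "P \<subseteq> V"
    and ineq: "(\<Sum>v\<in>P. (w v + 1) div 2 + 1 + w v div 2) \<le> (\<Sum>v\<in>V. w v div 2)"
  shows "card P \<le> lam (sorted_list_of_multiset (image_mset w (mset_set V)))"
proof -
  define ds where "ds = sorted_list_of_multiset (image_mset w (mset_set V))"
  define g where "g = (\<lambda>d::nat. (d + 1) div 2 + 1)"
  define h where "h = (\<lambda>d::nat. d div 2)"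
  have mset_ds: "mset ds = image_mset w (mset_set V)" by (simp add: ds_def)
  have P_le: "card P \<le> length ds"
  proof -
    have "length ds = card V" using arg_cong[OF mset_ds, of size] by simp
    then show ?thesis using assms(1,2) by (simp add: card_mono)
  qed
  have sub: "image_mset w (mset_set P) \<subseteq># mset ds"
    unfolding mset_ds using assms(1,2) by (intro image_mset_subseteq_mono) (simp add: finite_subset)
  have mono: "mono (\<lambda>d. g d + h d)"
    unfolding g_def h_def by (intro monoI add_mono div_le_mono) auto
  have "(\<Sum>d\<leftarrow>take (card P) ds. g d + h d) \<le> (\<Sum>v\<in>P. g (w v) + h (w v))"
    using sum_list_take_sorted_le_sum_mset[OF mono _ sub]
    by (simp add: ds_def sum_unfold_sum_mset image_mset.compositionality comp_def)
  also have "\<dots> \<le> (\<Sum>v\<in>V. h (w v))" using ineq by (simp add: g_def h_def)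
  also have "\<dots> = (\<Sum>d\<leftarrow>ds. h d)"
    by (simp add: sum_unfold_sum_mset mset_ds image_mset.compositionality comp_def
        flip: sum_mset_sum_list)
  also have "\<dots> = (\<Sum>d\<leftarrow>take (card P) ds. h d) + (\<Sum>d\<leftarrow>drop (card P) ds. h d)"
    by (simp flip: sum_list_append map_append)
  finally have "(\<Sum>d\<leftarrow>take (card P) ds. g d) \<le> (\<Sum>d\<leftarrow>drop (card P) ds. h d)"
    by (simp add: sum_list_addf)
  then show ?thesis
    using P_le le_lam lam_ok_iff_take_drop unfolding g_def h_def ds_def by blast
qed

lemma sum_card_swap_symmetric:
  assumes "finite A" "finite B" and sym: "\<And>x y. R x y \<Longrightarrow> R y x"
  shows "(\<Sum>a\<in>A. card {b\<in>B. R a b}) = (\<Sum>b\<in>B. card {a\<in>A. R b a})"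
proof -
  have "(\<Sum>a\<in>A. card {b\<in>B. R a b}) = (\<Sum>a\<in>A. \<Sum>b\<in>B. if R a b then 1 else 0)"
    using assms(2) by (simp flip: sum.inter_filter)
  also have "\<dots> = (\<Sum>b\<in>B. \<Sum>a\<in>A. if R a b then 1 else 0)"
    by (rule sum.swap)
  also have "\<dots> = (\<Sum>b\<in>B. \<Sum>a\<in>A. if R b a then 1 else 0)"
    using sym by (intro sum.cong refl) metis
  also have "\<dots> = (\<Sum>b\<in>B. card {a\<in>A. R b a})"
    using assms(1) by (simp flip: sum.inter_filter)
  finally show ?thesis .
qed

lemma sum_closed_nbhd_signs:
  fixes f :: "'a \<Rightarrow> int"
  assumes "simple_graph V E" and signs: "\<forall>u\<in>V. f u \<in> {-1, 1}"
  shows "(\<Sum>x\<in>closed_nbhd V E v. f x)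
    = f v + int (card {u\<in>V. E v u \<and> f u = 1}) - int (card {u\<in>V. E v u \<and> f u = -1})"
proof -
  have finV: "finite V" and "v \<notin> {u\<in>V. E v u}"
    using assms(1) unfolding simple_graph_def by auto
  then have "(\<Sum>x\<in>closed_nbhd V E v. f x) = f v + sum f {u\<in>V. E v u}"
    unfolding closed_nbhd_def by simp
  also have "{u\<in>V. E v u} = {u\<in>V. E v u \<and> f u = 1} \<union> {u\<in>V. E v u \<and> f u = -1}"
    using signs by auto
  also have "sum f \<dots> = sum f {u\<in>V. E v u \<and> f u = 1} + sum f {u\<in>V. E v u \<and> f u = -1}"
    using finV by (intro sum.union_disjoint) auto
  also have "sum f {u\<in>V. E v u \<and> f u = 1} = int (card {u\<in>V. E v u \<and> f u = 1})"
    by simp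
  also have "sum f {u\<in>V. E v u \<and> f u = -1} = - int (card {u\<in>V. E v u \<and> f u = -1})"
    by simp
  finally show ?thesis by simp
qed

lemma degree_eq_card_signs:
  fixes f :: "'a \<Rightarrow> int"
  assumes "simple_graph V E" and signs: "\<forall>u\<in>V. f u \<in> {-1, 1}"
  shows "degree V E v = card {u\<in>V. E v u \<and> f u = 1} + card {u\<in>V. E v u \<and> f u = -1}"
proof -
  have finV: "finite V" using assms(1) unfolding simple_graph_def by auto
  have "{u\<in>V. E v u} = {u\<in>V. E v u \<and> f u = 1} \<union> {u\<in>V. E v u \<and> f u = -1}"
    using signs by auto
  then have "degree V E v = card ({u\<in>V. E v u \<and> f u = 1} \<union> {u\<in>V. E v u \<and> f u = -1})"
    unfolding degree_def by (rule arg_cong)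
  also have "\<dots> = card {u\<in>V. E v u \<and> f u = 1} + card {u\<in>V. E v u \<and> f u = -1}"
    by (rule card_Un_disjoint) (use finV in auto)
  finally show ?thesis .
qed

lemma signed_dom_fun_minus_vertex:
  assumes "simple_graph V E" "signed_dom_fun V E f" "v \<in> V" "f v = -1"
  shows "(degree V E v + 1) div 2 + 1 \<le> card {u\<in>V. E v u \<and> f u = 1}"
proof -
  have signs: "\<forall>u\<in>V. f u \<in> {-1, 1}" and "(\<Sum>x\<in>closed_nbhd V E v. f x) \<ge> 1"
    using assms(2,3) unfolding signed_dom_fun_def by auto
  then show ?thesis
    using sum_closed_nbhd_signs[OF assms(1) signs, of v] degree_eq_card_signs[OF assms(1) signs, of v]
      assms(4) by linarith
qed

lemma signed_dom_fun_plus_vertex: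
  assumes "simple_graph V E" "signed_dom_fun V E f" "v \<in> V" "f v = 1"
  shows "card {u\<in>V. E v u \<and> f u = -1} \<le> degree V E v div 2"
proof -
  have signs: "\<forall>u\<in>V. f u \<in> {-1, 1}" and "(\<Sum>x\<in>closed_nbhd V E v. f x) \<ge> 1"
    using assms(2,3) unfolding signed_dom_fun_def by auto
  then show ?thesis
    using sum_closed_nbhd_signs[OF assms(1) signs, of v] degree_eq_card_signs[OF assms(1) signs, of v]
      assms(4) by linarith
qed

lemma signed_dom_fun_degree_inequality:
  assumes sg: "simple_graph V E" and sdf: "signed_dom_fun V E f"
  shows "(\<Sum>v | v \<in> V \<and> f v = -1. (degree V E v + 1) div 2 + 1 + degree V E v div 2)
    \<le> (\<Sum>v\<in>V. degree V E v div 2)"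
proof -
  define P where "P = {v\<in>V. f v = -1}"
  define M where "M = {v\<in>V. f v = 1}"
  have finV: "finite V" and sym: "\<And>u v. E u v \<Longrightarrow> E v u"
    using sg unfolding simple_graph_def by auto
  have V_split: "V = M \<union> P" and "M \<inter> P = {}"
    using sdf unfolding signed_dom_fun_def M_def P_def by auto
  have "(\<Sum>v\<in>P. (degree V E v + 1) div 2 + 1) \<le> (\<Sum>v\<in>P. card {u\<in>M. E v u})"
  proof (rule sum_mono)
    fix v assume "v \<in> P"
    moreover have "{u\<in>M. E v u} = {u\<in>V. E v u \<and> f u = 1}" by (auto simp: M_def)
    ultimately show "(degree V E v + 1) div 2 + 1 \<le> card {u\<in>M. E v u}"
      using signed_dom_fun_minus_vertex[OF sg sdf, of v] by (simp add: P_def)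
  qed
  also have "\<dots> = (\<Sum>u\<in>M. card {w\<in>P. E u w})"
    using finV sym by (intro sum_card_swap_symmetric) (auto simp: M_def P_def)
  also have "\<dots> \<le> (\<Sum>u\<in>M. degree V E u div 2)"
  proof (rule sum_mono)
    fix u assume "u \<in> M"
    moreover have "{w\<in>P. E u w} = {w\<in>V. E u w \<and> f w = -1}" by (auto simp: P_def)
    ultimately show "card {w\<in>P. E u w} \<le> degree V E u div 2"
      using signed_dom_fun_plus_vertex[OF sg sdf, of u] by (simp add: M_def)
  qed
  finally have "(\<Sum>v\<in>P. (degree V E v + 1) div 2 + 1) \<le> (\<Sum>u\<in>M. degree V E u div 2)" .
  moreover have "(\<Sum>v\<in>V. degree V E v div 2)
      = (\<Sum>v\<in>M. degree V E v div 2) + (\<Sum>v\<in>P. degree V E v div 2)"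
    using finV V_split \<open>M \<inter> P = {}\<close> sum.union_disjoint[of M P "\<lambda>v. degree V E v div 2"]
    by (metis finite_Un)
  moreover have "(\<Sum>v\<in>P. (degree V E v + 1) div 2 + 1 + degree V E v div 2)
      = (\<Sum>v\<in>P. (degree V E v + 1) div 2 + 1) + (\<Sum>v\<in>P. degree V E v div 2)"
    by (rule sum.distrib)
  ultimately show ?thesis unfolding P_def by linarith
qed

lemma sum_signs_eq:
  fixes f :: "'a \<Rightarrow> int"
  assumes "finite V" "\<forall>v\<in>V. f v \<in> {-1, 1}"
  shows "(\<Sum>v\<in>V. f v) = int (card V) - 2 * int (card {v\<in>V. f v = -1})"
proof -
  have "(\<Sum>v\<in>V. f v) = (\<Sum>v\<in>V. 1 - 2 * (if f v = -1 then 1 else 0))"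
    using assms(2) by (intro sum.cong) auto
  also have "\<dots> = int (card V) - 2 * int (card {v\<in>V. f v = -1})"
    using assms(1) by (simp add: sum_subtractf flip: sum_distrib_left sum.inter_filter)
  finally show ?thesis .
qed

lemma signed_dom_fun_weight_ge:
  assumes sg: "simple_graph V E" and sdf: "signed_dom_fun V E f"
  shows "int (card V) - 2 * int (lam (degree_seq V E)) \<le> (\<Sum>v\<in>V. f v)"
proof -
  have finV: "finite V" using sg unfolding simple_graph_def by simp
  have "card {v\<in>V. f v = -1} \<le> lam (degree_seq V E)"
    unfolding degree_seq_def using finV signed_dom_fun_degree_inequality[OF sg sdf]
    by (intro card_le_lam_sorted_weights) auto
  then show ?thesis
    using sum_signs_eq[OF finV] sdf unfolding signed_dom_fun_def by simp
qed

lemma signed_dom_number_attained: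
  assumes "simple_graph V E"
  obtains f where "signed_dom_fun V E f" "signed_dom_number V E = (\<Sum>v\<in>V. f v)"
proof -
  let ?W = "{(\<Sum>v\<in>V. f v) | f. signed_dom_fun V E f}"
  have finV: "finite V" using assms unfolding simple_graph_def by simp
  have "?W \<subseteq> {- int (card V) .. int (card V)}"
  proof
    fix x assume "x \<in> ?W"
    then obtain f where x: "x = (\<Sum>v\<in>V. f v)" and "signed_dom_fun V E f" by blast
    then have "\<forall>v\<in>V. \<bar>f v\<bar> = 1" unfolding signed_dom_fun_def by auto
    then have "\<bar>x\<bar> \<le> int (card V)" using x sum_abs[of f V] by simp
    then show "x \<in> {- int (card V) .. int (card V)}" by auto
  qed
  then have "finite ?W" by (rule finite_subset) simp
  moreover have "signed_dom_fun V E (\<lambda>_. 1)"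
    unfolding signed_dom_fun_def closed_nbhd_def using finV by (simp add: Suc_le_eq card_gt_0_iff)
  then have "?W \<noteq> {}" by blast
  ultimately have "Min ?W \<in> ?W" by (rule Min_in)
  then show ?thesis using that unfolding signed_dom_number_def by blast
qed

theorem theorem6:
  fixes V :: "'a set" and E :: "'a \<Rightarrow> 'a \<Rightarrow> bool"
  assumes "simple_graph V E"
  shows "signed_dom_number V E \<ge> int (card V) - 2 * int (lam (degree_seq V E))"
proof -
  obtain f where "signed_dom_fun V E f" "signed_dom_number V E = (\<Sum>v\<in>V. f v)"
    using signed_dom_number_attained[OF assms] .
  then show ?thesis using signed_dom_fun_weight_ge[OF assms] by simp
qed

end
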